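(* Let $\mathcal{D}\subset\mathbb{R}^N$ be open, bounded, connected, and let $y_0\in\partial\mathcal{D}$. Assume there exists $\theta_0<1$ such that for every $\delta>0$ there are $\hat\delta\in(0,\delta)$ and $\hat\epsilon\in(0,1)$ with the property: for all $\epsilon\in(0,\hat\epsilon)$ and all $x_0\in B_{\hat\delta}(y_0)\cap\mathcal{D}$, $$\mathbb{P}\big(\exists n\ge0:\ X_n^{\epsilon,x_0}\notin B_\delta(y_0)\big)\le\theta_0 .$$ Then $y_0$ is walk-regular.
   Context: Probability space: $\Omega_1=B_1(0)\subset\mathbb{R}^N$ with Borel $\sigma$-algebra and normalised Lebesgue measure; $(\Omega,\mathcal{F},\mathbb{P})$ is the countable product $\Omega=(\Omega_1)^{\mathbb{N}}$, $\omega=\{w_i\}_{i\ge1}$. The $\epsilon$-ball walk started at $x\in\mathcal{D}$: $X_0^{\epsilon,x}\equiv x$, $X_n^{\epsilon,x}=X_{n-1}^{\epsilon,x}+\big(\epsilon\wedge\operatorname{dist}(X_{n-1}^{\epsilon,x},\partial\mathcal{D})\big)w_n$ for $n\ge1$; it converges $\mathbb{P}$-a.s. to a random variable $X^{\epsilon,x}:\Omega\to\partial\mathcal{D}$. A point $y_0\in\partial\mathcal{D}$ is walk-regular if for every $\eta,\delta>0$ there exist $\hat\delta\in(0,\delta)$ and $\hat\epsilon\in(0,1)$ such that $\mathbb{P}(X^{\epsilon,x_0}\in B_\delta(y_0))\ge1-\eta$ for all $\epsilon\in(0,\hat\epsilon)$ and all $x_0\in B_{\hat\delta}(y_0)\cap\mathcal{D}$.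 *)

theory Defs
  imports "HOL-Probability.Probability"
begin

definition ball_step_measure :: "'a::euclidean_space measure" where
  "ball_step_measure = uniform_measure lborel (ball 0 1)"

text \<open>Countable product space; the coordinate w_i of the paper is \<omega> (i - 1).\<close>
definition walk_space :: "(nat \<Rightarrow> 'a::euclidean_space) measure" where
  "walk_space = PiM UNIV (\<lambda>_. ball_step_measure)"

primrec ball_walk :: "'a::euclidean_space set \<Rightarrow> real \<Rightarrow> 'a \<Rightarrow> (nat \<Rightarrow> 'a) \<Rightarrow> nat \<Rightarrow> 'a" where
  "ball_walk D eps x \<omega> 0 = x"
| "ball_walk D eps x \<omega> (Suc n) =
     ball_walk D eps x \<omega> n + min eps (infdist (ball_walk D eps x \<omega> n) (frontier D)) *\<^sub>R \<omega> n"

definition walk_limit :: "'a::euclidean_space set \<Rightarrow> real \<Rightarrow> 'a \<Rightarrow> (nat \<Rightarrow> 'a) \<Rightarrow> 'a" where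
  "walk_limit D eps x \<omega> = lim (ball_walk D eps x \<omega>)"

definition walk_regular :: "'a::euclidean_space set \<Rightarrow> 'a \<Rightarrow> bool" where
  "walk_regular D y0 \<longleftrightarrow> y0 \<in> frontier D \<and>
     (\<forall>\<eta>>0. \<forall>\<delta>>0. \<exists>\<delta>h\<in>{0<..<\<delta>}. \<exists>\<epsilon>h\<in>{0<..<1::real}.
        \<forall>\<epsilon>\<in>{0<..<\<epsilon>h}. \<forall>x0\<in>ball y0 \<delta>h \<inter> D.
          measure walk_space {\<omega>\<in>space walk_space. walk_limit D \<epsilon> x0 \<omega> \<in> ball y0 \<delta>} \<ge> 1 - \<eta>)"

end

theory Submission
  imports Defs
begin

text \<open>
  The increments \<open>r\<^sub>n w\<^sub>n\<close> of the walk, with radii \<open>r\<^sub>n = min(\<epsilon>, dist(X\<^sub>n, \<partial>D))\<close>, are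
  orthogonal in \<open>L\<^sup>2\<close>: \<open>w\<^sub>n\<close> is symmetric and independent of the past, which determines \<open>r\<^sub>n\<close>.
  Hence \<open>E|X\<^sub>N - x|\<^sup>2\<close> is the sum of the \<open>E|X\<^sub>n\<^sub>+\<^sub>1 - X\<^sub>n|\<^sup>2\<close> for \<open>n < N\<close>, which stays bounded
  because the walk never leaves the bounded domain \<open>D\<close>. Doob's maximal inequality, applied to
  the walk stopped once it has moved \<open>\<alpha>\<close> away, shows that the walk is almost surely Cauchy, so
  its limit \<open>X\<^sup>\<epsilon>\<^sup>,\<^sup>x\<close> is a genuine one.

  For regularity, the escape bound \<open>\<theta>\<^sub>0\<close> is iterated through nested balls around \<open>y\<^sub>0\<close>: to leave
  \<open>B(y\<^sub>0, \<rho>)\<close> the walk must first leave a smaller ball, and at that time it is within \<open>\<epsilon>\<close> of it,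
  where the bound applies again. By the strong Markov property the escape probability is at
  most \<open>\<theta>\<^sub>0\<^sup>k\<close>, and a walk that never leaves \<open>B(y\<^sub>0, \<delta>/2)\<close> converges into \<open>B(y\<^sub>0, \<delta>)\<close>.
\<close>

section \<open>The step measure and the walk space\<close>

lemma prob_space_ball_step_measure: "prob_space (ball_step_measure :: 'a::euclidean_space measure)"
proof -
  have "0 < emeasure lborel (ball (0::'a) 1)"
    by (subst emeasure_ball) auto
  then show ?thesis
    unfolding ball_step_measure_def
    using emeasure_lborel_ball_finite[of "0::'a" 1] by (intro prob_space_uniform_measure) auto
qed

lemma space_ball_step_measure [simp]: "space (ball_step_measure :: 'a::euclidean_space measure) = UNIV"
  unfolding ball_step_measure_def by simp

lemma sets_ball_step_measure [simp, measurable_cong]: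
  "sets (ball_step_measure :: 'a::euclidean_space measure) = sets borel"
  unfolding ball_step_measure_def by simp

lemma measurable_ball_step_measure_iff:
  "f \<in> measurable (ball_step_measure :: 'a::euclidean_space measure) N \<longleftrightarrow> f \<in> measurable borel N"
  by (simp add: measurable_cong_sets[OF sets_ball_step_measure refl])

lemma AE_ball_step_measure: "AE w in (ball_step_measure :: 'a::euclidean_space measure). w \<in> ball 0 1"
  unfolding ball_step_measure_def by (rule AE_uniform_measureI) auto

lemma prob_space_walk_space: "prob_space (walk_space :: (nat \<Rightarrow> 'a::euclidean_space) measure)"
  unfolding walk_space_def by (intro prob_space_PiM prob_space_ball_step_measure)

lemma space_walk_space [simp]: "space (walk_space :: (nat \<Rightarrow> 'a::euclidean_space) measure) = UNIV"
  unfolding walk_space_def by (simp add: space_PiM)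

lemma sets_walk_space_Collect:
  "Measurable.pred (walk_space :: (nat \<Rightarrow> 'a::euclidean_space) measure) P \<Longrightarrow> {\<omega>. P \<omega>} \<in> sets walk_space"
  by (drule predE) simp

lemma AE_walk_space: "AE \<omega> in (walk_space :: (nat \<Rightarrow> 'a::euclidean_space) measure). \<forall>n. \<omega> n \<in> ball 0 1"
  unfolding walk_space_def AE_all_countable
  by (intro allI AE_PiM_component prob_space_ball_step_measure AE_ball_step_measure) auto

lemma measurable_walk_space_component [measurable]:
  "(\<lambda>\<omega>. \<omega> i) \<in> borel_measurable (walk_space :: (nat \<Rightarrow> 'a::euclidean_space) measure)"
proof -
  have "(\<lambda>\<omega>. \<omega> i) \<in> measurable (walk_space :: (nat \<Rightarrow> 'a) measure) ball_step_measure"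
    unfolding walk_space_def by (rule measurable_component_singleton) simp
  then show ?thesis by (simp cong: measurable_cong_sets)
qed

lemma measurable_walk_space_comb_seq [measurable]:
  "(\<lambda>(\<omega>, \<omega>'). comb_seq i \<omega> \<omega>')
     \<in> measurable (walk_space \<Otimes>\<^sub>M walk_space) (walk_space :: (nat \<Rightarrow> 'a::euclidean_space) measure)"
  unfolding walk_space_def by (rule measurable_comb_seq)

lemma distr_walk_space_comb_seq:
  "distr (walk_space \<Otimes>\<^sub>M walk_space) walk_space (\<lambda>(\<omega>, \<omega>'). comb_seq i \<omega> \<omega>')
     = (walk_space :: (nat \<Rightarrow> 'a::euclidean_space) measure)"
proof -
  have "sequence_space (ball_step_measure :: 'a measure)"
    unfolding sequence_space_def product_prob_space_def product_sigma_finite_def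
      product_prob_space_axioms_def
    using prob_space_ball_step_measure by (auto intro: prob_space_imp_sigma_finite)
  then show ?thesis unfolding walk_space_def by (rule sequence_space.PiM_comb_seq)
qed

text \<open>The walk space splits at time \<open>k\<close> into independent past and future.\<close>
lemma nn_integral_walk_space_comb_seq:
  assumes [measurable]: "f \<in> borel_measurable (walk_space :: (nat \<Rightarrow> 'a::euclidean_space) measure)"
  shows "(\<integral>\<^sup>+\<omega>. f \<omega> \<partial>walk_space)
    = (\<integral>\<^sup>+\<omega>. \<integral>\<^sup>+\<omega>'. f (comb_seq k \<omega> \<omega>') \<partial>walk_space \<partial>walk_space)"
proof -
  interpret P: prob_space "walk_space :: (nat \<Rightarrow> 'a) measure" by (rule prob_space_walk_space)
  have "(\<integral>\<^sup>+\<omega>. f \<omega> \<partial>walk_space)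
      = (\<integral>\<^sup>+\<omega>. f \<omega> \<partial>distr (walk_space \<Otimes>\<^sub>M walk_space) walk_space (\<lambda>(\<omega>, \<omega>'). comb_seq k \<omega> \<omega>'))"
    by (simp add: distr_walk_space_comb_seq)
  also have "\<dots> = (\<integral>\<^sup>+z. f (case z of (\<omega>, \<omega>') \<Rightarrow> comb_seq k \<omega> \<omega>') \<partial>(walk_space \<Otimes>\<^sub>M walk_space))"
    by (rule nn_integral_distr) measurable
  also have "\<dots> = (\<integral>\<^sup>+\<omega>. \<integral>\<^sup>+\<omega>'. f (case (\<omega>, \<omega>') of (\<omega>, \<omega>') \<Rightarrow> comb_seq k \<omega> \<omega>') \<partial>walk_space \<partial>walk_space)"
    by (rule P.nn_integral_fst[symmetric]) measurable
  finally show ?thesis by simp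
qed

lemma nn_integral_walk_space_component:
  assumes [measurable]: "g \<in> borel_measurable borel"
  shows "(\<integral>\<^sup>+\<omega>. g (\<omega> i) \<partial>walk_space) = (\<integral>\<^sup>+w. g w \<partial>(ball_step_measure :: 'a::euclidean_space measure))"
proof -
  have [measurable]: "(\<lambda>\<omega>. \<omega> i) \<in> (walk_space :: (nat \<Rightarrow> 'a) measure) \<rightarrow>\<^sub>M ball_step_measure"
    unfolding walk_space_def by (rule measurable_component_singleton) simp
  have "distr walk_space ball_step_measure (\<lambda>\<omega>. \<omega> i) = (ball_step_measure :: 'a measure)"
    unfolding walk_space_def by (rule distr_PiM_component) (auto intro: prob_space_ball_step_measure)
  moreover have "g \<in> borel_measurable (ball_step_measure :: 'a measure)"
    using assms by (simp add: measurable_ball_step_measure_iff)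
  ultimately show ?thesis
    using nn_integral_distr[of "\<lambda>\<omega>. \<omega> i" walk_space ball_step_measure g] by simp
qed

lemma distr_lborel_uminus: "distr lborel borel uminus = (lborel :: 'a::euclidean_space measure)"
proof -
  have "(lborel :: 'a measure)
      = density (distr lborel borel (\<lambda>x. 0 + (-1) *\<^sub>R x)) (\<lambda>_. ennreal (\<bar>-1::real\<bar> ^ DIM('a)))"
    by (rule lborel_affine) simp
  then show ?thesis
    by (simp add: density_1 one_ennreal_def[symmetric])
qed

lemma nn_integral_ball_step_measure_uminus:
  fixes f :: "'a::euclidean_space \<Rightarrow> ennreal"
  assumes [measurable]: "f \<in> borel_measurable borel"
  shows "(\<integral>\<^sup>+x. f (- x) \<partial>ball_step_measure) = (\<integral>\<^sup>+x. f x \<partial>ball_step_measure)"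
proof -
  let ?g = "\<lambda>x. f x * indicator (ball (0::'a) 1) x"
  have [measurable]: "?g \<in> borel_measurable borel"
    by (intro borel_measurable_times_ennreal assms borel_measurable_indicator) simp
  have "(\<integral>\<^sup>+x. ?g x \<partial>lborel) = (\<integral>\<^sup>+x. ?g x \<partial>distr lborel borel uminus)"
    by (simp add: distr_lborel_uminus)
  also have "\<dots> = (\<integral>\<^sup>+x. ?g (- x) \<partial>lborel)"
    by (subst nn_integral_distr) auto
  also have "\<dots> = (\<integral>\<^sup>+x. f (- x) * indicator (ball 0 1) x \<partial>lborel)"
    by (simp add: indicator_def)
  finally show ?thesis
    unfolding ball_step_measure_def by (subst (1 2) nn_integral_uniform_measure) auto
qed

section \<open>Orthogonality of the increments\<close>

definition ball_second_moment :: "'a::euclidean_space itself \<Rightarrow> ennreal" where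
  "ball_second_moment _ = (\<integral>\<^sup>+w. ennreal ((norm (w::'a))\<^sup>2) \<partial>ball_step_measure)"

text \<open>Averaging over \<open>w\<close> and \<open>-w\<close> kills the cross term, by the parallelogram law.\<close>
lemma nn_integral_ball_step_measure_norm_sq:
  fixes h :: "'a::euclidean_space" and s :: real
  shows "(\<integral>\<^sup>+w. ennreal ((norm (h + s *\<^sub>R w))\<^sup>2) \<partial>ball_step_measure)
     = ennreal ((norm h)\<^sup>2) + ennreal (s\<^sup>2) * ball_second_moment TYPE('a)"
proof -
  interpret B: prob_space "ball_step_measure :: 'a measure" by (rule prob_space_ball_step_measure)
  let ?I = "\<integral>\<^sup>+w. ennreal ((norm (h + s *\<^sub>R w))\<^sup>2) \<partial>(ball_step_measure :: 'a measure)"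
  have parallelogram:
      "(norm (h + s *\<^sub>R w))\<^sup>2 + (norm (h - s *\<^sub>R w))\<^sup>2 = 2 * (norm h)\<^sup>2 + 2 * s\<^sup>2 * (norm w)\<^sup>2"
    for w :: 'a
  proof -
    have "(norm (h + v))\<^sup>2 + (norm (h - v))\<^sup>2 = 2 * (norm h)\<^sup>2 + 2 * (norm v)\<^sup>2" for v :: 'a
      by (simp add: power2_norm_eq_inner inner_add inner_diff algebra_simps)
    from this[of "s *\<^sub>R w"] show ?thesis by (simp add: power_mult_distrib)
  qed
  have reflect: "(\<integral>\<^sup>+w. ennreal ((norm (h - s *\<^sub>R w))\<^sup>2) \<partial>(ball_step_measure :: 'a measure)) = ?I"
    using nn_integral_ball_step_measure_uminus[of "\<lambda>w. ennreal ((norm (h + s *\<^sub>R w))\<^sup>2)"] by simp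
  have [measurable]: "(\<lambda>w. (norm (h + s *\<^sub>R w))\<^sup>2) \<in> borel_measurable (ball_step_measure :: 'a measure)"
    "(\<lambda>w. (norm (h - s *\<^sub>R w))\<^sup>2) \<in> borel_measurable (ball_step_measure :: 'a measure)"
    "(\<lambda>w. (norm w)\<^sup>2) \<in> borel_measurable (ball_step_measure :: 'a measure)"
    unfolding measurable_ball_step_measure_iff
    by (intro borel_measurable_continuous_onI continuous_intros)+
  have "?I + ?I = (\<integral>\<^sup>+w. ennreal ((norm (h + s *\<^sub>R w))\<^sup>2) + ennreal ((norm (h - s *\<^sub>R w))\<^sup>2)
      \<partial>(ball_step_measure :: 'a measure))"
    by (subst nn_integral_add) (auto simp: reflect)
  also have "\<dots> = (\<integral>\<^sup>+w. ennreal (2 * (norm h)\<^sup>2) + ennreal (2 * s\<^sup>2) * ennreal ((norm w)\<^sup>2)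
      \<partial>(ball_step_measure :: 'a measure))"
  proof (rule nn_integral_cong)
    fix w :: 'a
    show "ennreal ((norm (h + s *\<^sub>R w))\<^sup>2) + ennreal ((norm (h - s *\<^sub>R w))\<^sup>2)
      = ennreal (2 * (norm h)\<^sup>2) + ennreal (2 * s\<^sup>2) * ennreal ((norm w)\<^sup>2)"
      using parallelogram[of w]
      by (simp add: ennreal_plus[symmetric] ennreal_mult[symmetric] del: ennreal_plus)
  qed
  also have "\<dots> = ennreal (2 * (norm h)\<^sup>2) + ennreal (2 * s\<^sup>2) * ball_second_moment TYPE('a)"
    unfolding ball_second_moment_def
    using B.emeasure_space_1 by (subst nn_integral_add) (auto simp: nn_integral_cmult)
  also have "\<dots> = 2 * (ennreal ((norm h)\<^sup>2) + ennreal (s\<^sup>2) * ball_second_moment TYPE('a))"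
    by (simp add: ennreal_mult distrib_left mult.assoc)
  finally have "2 * ?I = 2 * (ennreal ((norm h)\<^sup>2) + ennreal (s\<^sup>2) * ball_second_moment TYPE('a))"
    by (simp add: mult_2)
  then show ?thesis
    unfolding ennreal_mult_cancel_left by auto
qed

lemma nn_integral_norm_sq_add_step:
  fixes h :: "(nat \<Rightarrow> 'a::euclidean_space) \<Rightarrow> 'a" and s :: "(nat \<Rightarrow> 'a) \<Rightarrow> real"
  assumes [measurable]: "h \<in> borel_measurable walk_space" "s \<in> borel_measurable walk_space"
    and past: "\<And>\<omega> \<omega>'. \<forall>i<n. \<omega> i = \<omega>' i \<Longrightarrow> h \<omega> = h \<omega>' \<and> s \<omega> = s \<omega>'"
  shows "(\<integral>\<^sup>+\<omega>. ennreal ((norm (h \<omega> + s \<omega> *\<^sub>R \<omega> n))\<^sup>2) \<partial>walk_space)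
    = (\<integral>\<^sup>+\<omega>. ennreal ((norm (h \<omega>))\<^sup>2) \<partial>walk_space)
      + ball_second_moment TYPE('a) * (\<integral>\<^sup>+\<omega>. ennreal ((s \<omega>)\<^sup>2) \<partial>walk_space)"
proof -
  have comb: "h (comb_seq n \<omega> \<omega>') = h \<omega>" "s (comb_seq n \<omega> \<omega>') = s \<omega>" "comb_seq n \<omega> \<omega>' n = \<omega>' 0"
    for \<omega> \<omega>' :: "nat \<Rightarrow> 'a"
    using past[of "comb_seq n \<omega> \<omega>'" \<omega>] by (auto simp: comb_seq_less comb_seq_def)
  have "(\<integral>\<^sup>+\<omega>. ennreal ((norm (h \<omega> + s \<omega> *\<^sub>R \<omega> n))\<^sup>2) \<partial>walk_space)
      = (\<integral>\<^sup>+\<omega>. \<integral>\<^sup>+\<omega>'. ennreal ((norm (h \<omega> + s \<omega> *\<^sub>R \<omega>' 0))\<^sup>2) \<partial>walk_space \<partial>walk_space)"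
    by (subst nn_integral_walk_space_comb_seq[where k=n]) (simp_all add: comb)
  also have "\<dots> = (\<integral>\<^sup>+\<omega>. ennreal ((norm (h \<omega>))\<^sup>2) + ennreal ((s \<omega>)\<^sup>2) * ball_second_moment TYPE('a)
      \<partial>walk_space)"
  proof (rule nn_integral_cong)
    fix \<omega> :: "nat \<Rightarrow> 'a"
    have "(\<lambda>w. ennreal ((norm (h \<omega> + s \<omega> *\<^sub>R w))\<^sup>2)) \<in> borel_measurable borel"
      by measurable
    show "(\<integral>\<^sup>+\<omega>'. ennreal ((norm (h \<omega> + s \<omega> *\<^sub>R \<omega>' 0))\<^sup>2) \<partial>walk_space)
      = ennreal ((norm (h \<omega>))\<^sup>2) + ennreal ((s \<omega>)\<^sup>2) * ball_second_moment TYPE('a)"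
      using nn_integral_walk_space_component[OF \<open>_ \<in> borel_measurable borel\<close>, of 0]
      by (simp add: nn_integral_ball_step_measure_norm_sq)
  qed
  also have "\<dots> = (\<integral>\<^sup>+\<omega>. ennreal ((norm (h \<omega>))\<^sup>2) \<partial>walk_space)
      + ball_second_moment TYPE('a) * (\<integral>\<^sup>+\<omega>. ennreal ((s \<omega>)\<^sup>2) \<partial>walk_space)"
    by (subst nn_integral_add) (auto simp: nn_integral_cmult mult.commute)
  finally show ?thesis .
qed

definition predictable :: "(nat \<Rightarrow> (nat \<Rightarrow> 'a) \<Rightarrow> 'b) \<Rightarrow> bool" where
  "predictable a \<longleftrightarrow> (\<forall>n \<omega> \<omega>'. (\<forall>i<n. \<omega> i = \<omega>' i) \<longrightarrow> a n \<omega> = a n \<omega>')"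

lemma nn_integral_norm_sq_predictable_sum:
  fixes a :: "nat \<Rightarrow> (nat \<Rightarrow> 'a::euclidean_space) \<Rightarrow> real"
  assumes [measurable]: "\<And>n. a n \<in> borel_measurable walk_space" and "predictable a"
  shows "(\<integral>\<^sup>+\<omega>. ennreal ((norm (\<Sum>i<N. a i \<omega> *\<^sub>R \<omega> i))\<^sup>2) \<partial>walk_space)
     = (\<Sum>i<N. ball_second_moment TYPE('a) * (\<integral>\<^sup>+\<omega>. ennreal ((a i \<omega>)\<^sup>2) \<partial>walk_space))"
proof (induction N)
  case (Suc N)
  have "(\<Sum>i<N. a i \<omega> *\<^sub>R \<omega> i) = (\<Sum>i<N. a i \<omega>' *\<^sub>R \<omega>' i) \<and> a N \<omega> = a N \<omega>'"
    if "\<forall>i<N. \<omega> i = \<omega>' i" for \<omega> \<omega>'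
    using \<open>predictable a\<close> that unfolding predictable_def by (auto intro!: sum.cong)
  note past = this
  have [measurable]: "(\<lambda>\<omega>. \<Sum>i<N. a i \<omega> *\<^sub>R \<omega> i) \<in> borel_measurable walk_space"
    by measurable
  have "(\<integral>\<^sup>+\<omega>. ennreal ((norm (\<Sum>i<Suc N. a i \<omega> *\<^sub>R \<omega> i))\<^sup>2) \<partial>walk_space)
      = (\<integral>\<^sup>+\<omega>. ennreal ((norm ((\<Sum>i<N. a i \<omega> *\<^sub>R \<omega> i) + a N \<omega> *\<^sub>R \<omega> N))\<^sup>2) \<partial>walk_space)"
    by simp
  also have "\<dots> = (\<integral>\<^sup>+\<omega>. ennreal ((norm (\<Sum>i<N. a i \<omega> *\<^sub>R \<omega> i))\<^sup>2) \<partial>walk_space)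
      + ball_second_moment TYPE('a) * (\<integral>\<^sup>+\<omega>. ennreal ((a N \<omega>)\<^sup>2) \<partial>walk_space)"
    by (rule nn_integral_norm_sq_add_step[OF _ _ past]) measurable
  finally show ?case
    using Suc by simp
qed simp

lemma ball_infdist_frontier_subset:
  fixes D :: "'a::real_normed_vector set"
  assumes "y \<in> D"
  shows "ball y (infdist y (frontier D)) \<subseteq> D"
proof
  fix z assume z: "z \<in> ball y (infdist y (frontier D))"
  let ?B = "ball y (infdist y (frontier D))"
  show "z \<in> D"
  proof (rule ccontr)
    assume "z \<notin> D"
    have "?B \<inter> frontier D \<noteq> {}"
    proof (rule connected_Int_frontier)
      have "y \<in> ?B" using z order_le_less_trans[OF zero_le_dist] by simp
      then show "?B \<inter> D \<noteq> {}" using assms by blast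
      show "?B - D \<noteq> {}" using z \<open>z \<notin> D\<close> by blast
    qed simp
    then obtain p where "p \<in> frontier D" "dist y p < infdist y (frontier D)" by auto
    then show False using infdist_le[of p "frontier D" y] by simp
  qed
qed

definition step_radius :: "'a::euclidean_space set \<Rightarrow> real \<Rightarrow> 'a \<Rightarrow> nat \<Rightarrow> (nat \<Rightarrow> 'a) \<Rightarrow> real" where
  "step_radius D eps x n \<omega> = min eps (infdist (ball_walk D eps x \<omega> n) (frontier D))"

lemma ball_walk_Suc_step_radius:
  "ball_walk D eps x \<omega> (Suc n) = ball_walk D eps x \<omega> n + step_radius D eps x n \<omega> *\<^sub>R \<omega> n"
  by (simp add: step_radius_def)

lemma step_radius_nonneg: "0 \<le> eps \<Longrightarrow> 0 \<le> step_radius D eps x n \<omega>"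
  by (simp add: step_radius_def infdist_nonneg)

lemma ball_walk_in_domain:
  assumes "x \<in> D" "\<forall>n. \<omega> n \<in> ball 0 1" "0 \<le> eps"
  shows "ball_walk D eps x \<omega> n \<in> D"
proof (induction n)
  case (Suc n)
  let ?y = "ball_walk D eps x \<omega> n" and ?r = "step_radius D eps x n \<omega>"
  show ?case
  proof (cases "?r = 0")
    case False
    then have "0 < ?r" using step_radius_nonneg[OF assms(3)] by (simp add: order_less_le)
    moreover have "norm (\<omega> n) < 1" using assms(2) by simp
    ultimately have "?r * norm (\<omega> n) < ?r"
      using mult_strict_left_mono[of "norm (\<omega> n)" 1 ?r] by simp
    also have "?r \<le> infdist ?y (frontier D)" by (simp add: step_radius_def)
    finally have "?y + ?r *\<^sub>R \<omega> n \<in> ball ?y (infdist ?y (frontier D))"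
      using \<open>0 < ?r\<close> by (simp add: dist_norm)
    then show ?thesis
      unfolding ball_walk_Suc_step_radius using ball_infdist_frontier_subset[OF Suc] by blast
  qed (use Suc in \<open>simp only: ball_walk_Suc_step_radius scale_zero_left add_0_right\<close>)
qed (use assms in simp)

lemma dist_ball_walk_Suc_le:
  assumes "\<forall>n. \<omega> n \<in> ball 0 1" "0 \<le> eps"
  shows "dist (ball_walk D eps x \<omega> (Suc n)) (ball_walk D eps x \<omega> n) \<le> eps"
proof -
  let ?r = "step_radius D eps x n \<omega>"
  have "0 \<le> ?r" "?r \<le> eps"
    using step_radius_nonneg[OF assms(2)] by (auto simp: step_radius_def)
  moreover have "norm (\<omega> n) \<le> 1" using assms(1) less_imp_le by auto
  ultimately have "?r * norm (\<omega> n) \<le> eps * 1" by (intro mult_mono) auto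
  then show ?thesis
    unfolding ball_walk_Suc_step_radius using \<open>0 \<le> ?r\<close> by (simp add: dist_norm)
qed

lemma ball_walk_cong:
  "\<forall>i<n. \<omega> i = \<omega>' i \<Longrightarrow> ball_walk D eps x \<omega> n = ball_walk D eps x \<omega>' n"
  by (induction n) auto

lemma ball_walk_comb_seq_le:
  "j \<le> k \<Longrightarrow> ball_walk D eps x (comb_seq k \<omega> \<omega>') j = ball_walk D eps x \<omega> j"
  by (intro ball_walk_cong) (auto simp: comb_seq_less)

lemma ball_walk_comb_seq_add:
  "ball_walk D eps x (comb_seq k \<omega> \<omega>') (k + n) = ball_walk D eps (ball_walk D eps x \<omega> k) \<omega>' n"
proof (induction n)
  case (Suc n)
  have "comb_seq k \<omega> \<omega>' (k + n) = \<omega>' n"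
    using comb_seq_add[of k \<omega> \<omega>' n] by (simp add: add.commute)
  then show ?case using Suc by simp
qed (simp add: ball_walk_comb_seq_le)

lemma borel_measurable_infdist [measurable]: "(\<lambda>y. infdist y S) \<in> borel_measurable borel"
  by (intro borel_measurable_continuous_onI continuous_intros)

lemma measurable_ball_walk [measurable]:
  "(\<lambda>\<omega>. ball_walk D eps x \<omega> n) \<in> borel_measurable (walk_space :: (nat \<Rightarrow> 'a::euclidean_space) measure)"
proof (induction n)
  case (Suc n)
  note Suc [measurable]
  show ?case by simp
qed simp

lemma measurable_step_radius [measurable]:
  "step_radius D eps x n \<in> borel_measurable (walk_space :: (nat \<Rightarrow> 'a::euclidean_space) measure)"
  unfolding step_radius_def[abs_def] by measurable

lemma predictable_step_radius: "predictable (step_radius D eps x)"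
  unfolding predictable_def step_radius_def using ball_walk_cong by metis

lemma ball_walk_eq_sum:
  "ball_walk D eps x \<omega> n = x + (\<Sum>i<n. step_radius D eps x i \<omega> *\<^sub>R \<omega> i)"
proof (induction n)
  case (Suc n)
  then show ?case by (simp only: ball_walk_Suc_step_radius sum.lessThan_Suc add.assoc)
qed simp

section \<open>Almost sure convergence\<close>

text \<open>By \<open>nn_integral_norm_sq_add_step\<close> with \<open>h = 0\<close>, this is \<open>E |X\<^sub>n\<^sub>+\<^sub>1 - X\<^sub>n|\<^sup>2\<close>.\<close>
definition step_variance :: "'a::euclidean_space set \<Rightarrow> real \<Rightarrow> 'a \<Rightarrow> nat \<Rightarrow> ennreal" where
  "step_variance D eps x n =
     ball_second_moment TYPE('a) * (\<integral>\<^sup>+\<omega>. ennreal ((step_radius D eps x n \<omega>)\<^sup>2) \<partial>walk_space)"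

lemma nn_integral_norm_sq_ball_walk:
  "(\<integral>\<^sup>+\<omega>. ennreal ((norm (ball_walk D eps x \<omega> N - x))\<^sup>2) \<partial>walk_space) = (\<Sum>n<N. step_variance D eps x n)"
  unfolding ball_walk_eq_sum step_variance_def
  using nn_integral_norm_sq_predictable_sum[OF measurable_step_radius predictable_step_radius] by simp

lemma suminf_step_variance_less_top:
  fixes D :: "'a::euclidean_space set"
  assumes "bounded D" "x \<in> D" "0 \<le> eps"
  shows "(\<Sum>n. step_variance D eps x n) < \<top>"
proof -
  interpret P: prob_space "walk_space :: (nat \<Rightarrow> 'a) measure" by (rule prob_space_walk_space)
  obtain R where R: "\<forall>y\<in>D. dist x y \<le> R"
    using \<open>bounded D\<close> bounded_any_center by blast
  have "(\<Sum>n<N. step_variance D eps x n) \<le> ennreal (R\<^sup>2)" for N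
  proof -
    have "AE \<omega> in walk_space. ennreal ((norm (ball_walk D eps x \<omega> N - x))\<^sup>2) \<le> ennreal (R\<^sup>2)"
      using AE_walk_space
    proof eventually_elim
      case (elim \<omega>)
      then have "ball_walk D eps x \<omega> N \<in> D" using ball_walk_in_domain assms(2,3) by blast
      then have "norm (ball_walk D eps x \<omega> N - x) \<le> R"
        using R by (auto simp: dist_norm norm_minus_commute)
      then show ?case by (intro ennreal_leI power_mono) auto
    qed
    then have "(\<integral>\<^sup>+\<omega>. ennreal ((norm (ball_walk D eps x \<omega> N - x))\<^sup>2) \<partial>walk_space)
        \<le> (\<integral>\<^sup>+\<omega>. ennreal (R\<^sup>2) \<partial>(walk_space :: (nat \<Rightarrow> 'a) measure))"
      by (rule nn_integral_mono_AE)
    then show ?thesis using P.emeasure_space_1 by (simp add: nn_integral_norm_sq_ball_walk)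
  qed
  then have "(\<Sum>n. step_variance D eps x n) \<le> ennreal (R\<^sup>2)"
    by (intro suminf_le_const summableI)
  then show ?thesis using order_le_less_trans by fastforce
qed

lemma sum_stopped_increments:
  fixes Y :: "nat \<Rightarrow> 'a::ab_group_add"
  assumes "\<And>n. Y (Suc n) = Y n + d n" "m \<le> j" "j \<le> N"
  shows "(\<Sum>i<N. if m \<le> i \<and> i < j then d i else 0) = Y j - Y m"
proof -
  have "(\<Sum>i<N. if m \<le> i \<and> i < j then d i else 0) = (\<Sum>i\<in>{m..<j}. d i)"
    using assms(3) by (intro sum.mono_neutral_cong_right) auto
  also have "\<dots> = (\<Sum>i\<in>{m..<j}. Y (Suc i) - Y i)"
    using assms(1) by (simp add: algebra_simps)
  also have "\<dots> = Y j - Y m"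
    using assms(2) by (rule sum_Suc_diff')
  finally show ?thesis .
qed

lemma emeasure_norm_ge_le_nn_integral_sq:
  fixes f :: "'b \<Rightarrow> 'a::real_normed_vector"
  assumes [measurable]: "f \<in> borel_measurable M" and "0 < \<alpha>"
  shows "emeasure M {x\<in>space M. \<alpha> \<le> norm (f x)}
    \<le> ennreal (1 / \<alpha>\<^sup>2) * (\<integral>\<^sup>+x. ennreal ((norm (f x))\<^sup>2) \<partial>M)"
proof -
  have "\<alpha> \<le> norm (f x) \<longleftrightarrow> 1 \<le> ennreal (1 / \<alpha>\<^sup>2) * ennreal ((norm (f x))\<^sup>2)" for x
  proof -
    have "\<alpha> \<le> norm (f x) \<longleftrightarrow> \<alpha>\<^sup>2 \<le> (norm (f x))\<^sup>2"
      using \<open>0 < \<alpha>\<close> by (simp add: power_mono_iff)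
    also have "\<dots> \<longleftrightarrow> 1 \<le> ennreal ((norm (f x))\<^sup>2 / \<alpha>\<^sup>2)"
      using \<open>0 < \<alpha>\<close> by (simp add: ennreal_1[symmetric] ennreal_le_iff del: ennreal_1)
    finally show ?thesis
      using \<open>0 < \<alpha>\<close> by (simp add: ennreal_mult[symmetric] mult.commute)
  qed
  then have "emeasure M {x\<in>space M. \<alpha> \<le> norm (f x)}
      = emeasure M {x\<in>space M. 1 \<le> ennreal (1 / \<alpha>\<^sup>2) * ennreal ((norm (f x))\<^sup>2)}"
    by simp
  also have "\<dots> \<le> ennreal (1 / \<alpha>\<^sup>2) * (\<integral>\<^sup>+x. ennreal ((norm (f x))\<^sup>2) * indicator (space M) x \<partial>M)"
    by (rule nn_integral_Markov_inequality) auto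
  also have "(\<integral>\<^sup>+x. ennreal ((norm (f x))\<^sup>2) * indicator (space M) x \<partial>M)
      = (\<integral>\<^sup>+x. ennreal ((norm (f x))\<^sup>2) \<partial>M)"
    by (intro nn_integral_cong) simp
  finally show ?thesis .
qed

text \<open>Driven by these radii, the walk is stopped at the first time after \<open>m\<close> at which it is
  \<open>\<alpha>\<close> away from \<open>X\<^sub>m\<close>.\<close>
definition stopped_radius ::
    "'a::euclidean_space set \<Rightarrow> real \<Rightarrow> 'a \<Rightarrow> nat \<Rightarrow> real \<Rightarrow> nat \<Rightarrow> (nat \<Rightarrow> 'a) \<Rightarrow> real" where
  "stopped_radius D eps x m \<alpha> n \<omega> =
     (if m \<le> n \<and> (\<forall>j\<in>{m..n}. dist (ball_walk D eps x \<omega> j) (ball_walk D eps x \<omega> m) < \<alpha>)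
      then step_radius D eps x n \<omega> else 0)"

lemma measurable_stopped_radius [measurable]:
  "stopped_radius D eps x m \<alpha> n \<in> borel_measurable (walk_space :: (nat \<Rightarrow> 'a::euclidean_space) measure)"
  unfolding stopped_radius_def[abs_def] by measurable

lemma predictable_stopped_radius: "predictable (stopped_radius D eps x m \<alpha>)"
  unfolding predictable_def
proof (intro allI impI)
  fix n and \<omega> \<omega>' :: "nat \<Rightarrow> 'a"
  assume past: "\<forall>i<n. \<omega> i = \<omega>' i"
  then have X_eq: "ball_walk D eps x \<omega> j = ball_walk D eps x \<omega>' j" if "j \<le> n" for j
    using that by (intro ball_walk_cong) auto
  have "(\<forall>j\<in>{m..n}. dist (ball_walk D eps x \<omega> j) (ball_walk D eps x \<omega> m) < \<alpha>)
      = (\<forall>j\<in>{m..n}. dist (ball_walk D eps x \<omega>' j) (ball_walk D eps x \<omega>' m) < \<alpha>)" if "m \<le> n"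
    using that by (simp add: X_eq)
  moreover have "step_radius D eps x n \<omega> = step_radius D eps x n \<omega>'"
    using predictable_step_radius past unfolding predictable_def by blast
  ultimately show "stopped_radius D eps x m \<alpha> n \<omega> = stopped_radius D eps x m \<alpha> n \<omega>'"
    by (cases "m \<le> n") (simp_all add: stopped_radius_def)
qed

lemma norm_sum_stopped_radius_ge:
  assumes "j \<in> {m..N}" "\<alpha> \<le> dist (ball_walk D eps x \<omega> j) (ball_walk D eps x \<omega> m)"
  shows "\<alpha> \<le> norm (\<Sum>i<N. stopped_radius D eps x m \<alpha> i \<omega> *\<^sub>R \<omega> i)"
proof -
  let ?X = "ball_walk D eps x \<omega>"
  let ?P = "\<lambda>j. j \<in> {m..N} \<and> \<alpha> \<le> dist (?X j) (?X m)"
  define j0 where "j0 = (LEAST j. ?P j)"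
  have j0: "?P j0"
    unfolding j0_def by (rule LeastI) (use assms in blast)
  have before_j0: "dist (?X i) (?X m) < \<alpha>" if "i \<in> {m..<j0}" for i
    using not_less_Least[of i ?P] that j0 unfolding j0_def[symmetric] by auto
  have "stopped_radius D eps x m \<alpha> i \<omega> = (if m \<le> i \<and> i < j0 then step_radius D eps x i \<omega> else 0)" for i
  proof (cases "m \<le> i \<and> i < j0")
    case True
    then have "\<forall>j\<in>{m..i}. dist (?X j) (?X m) < \<alpha>" using before_j0 by auto
    with True show ?thesis by (simp add: stopped_radius_def)
  next
    case False
    then have stopped: "\<not> (m \<le> i \<and> (\<forall>j\<in>{m..i}. dist (?X j) (?X m) < \<alpha>))"
      using j0 by (auto simp: not_less)
    show ?thesis unfolding stopped_radius_def if_not_P[OF stopped] if_not_P[OF False] ..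
  qed
  then have "(\<Sum>i<N. stopped_radius D eps x m \<alpha> i \<omega> *\<^sub>R \<omega> i)
      = (\<Sum>i<N. if m \<le> i \<and> i < j0 then step_radius D eps x i \<omega> *\<^sub>R \<omega> i else 0)"
    by (intro sum.cong) auto
  also have "\<dots> = ?X j0 - ?X m"
    by (rule sum_stopped_increments[where Y="?X", OF ball_walk_Suc_step_radius]) (use j0 in auto)
  finally show ?thesis
    using j0 by (simp add: dist_norm)
qed

lemma nn_integral_norm_sq_sum_stopped_radius_le:
  "(\<integral>\<^sup>+\<omega>. ennreal ((norm (\<Sum>i<N. stopped_radius D eps x m \<alpha> i \<omega> *\<^sub>R \<omega> i))\<^sup>2) \<partial>walk_space)
    \<le> (\<Sum>n\<in>{m..<N}. step_variance D eps x n)"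
proof -
  have "(\<integral>\<^sup>+\<omega>. ennreal ((norm (\<Sum>i<N. stopped_radius D eps x m \<alpha> i \<omega> *\<^sub>R \<omega> i))\<^sup>2) \<partial>walk_space)
      = (\<Sum>i<N. ball_second_moment TYPE('a)
          * (\<integral>\<^sup>+\<omega>. ennreal ((stopped_radius D eps x m \<alpha> i \<omega>)\<^sup>2) \<partial>walk_space))"
    by (rule nn_integral_norm_sq_predictable_sum[OF measurable_stopped_radius predictable_stopped_radius])
  also have "\<dots> \<le> (\<Sum>i<N. if m \<le> i then step_variance D eps x i else 0)"
  proof (rule sum_mono)
    fix i
    have "(\<integral>\<^sup>+\<omega>. ennreal ((stopped_radius D eps x m \<alpha> i \<omega>)\<^sup>2) \<partial>walk_space)
        \<le> (\<integral>\<^sup>+\<omega>. (if m \<le> i then ennreal ((step_radius D eps x i \<omega>)\<^sup>2) else 0)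
          \<partial>(walk_space :: (nat \<Rightarrow> 'a) measure))"
      by (intro nn_integral_mono) (simp add: stopped_radius_def)
    then show "ball_second_moment TYPE('a)
        * (\<integral>\<^sup>+\<omega>. ennreal ((stopped_radius D eps x m \<alpha> i \<omega>)\<^sup>2) \<partial>walk_space)
        \<le> (if m \<le> i then step_variance D eps x i else 0)"
      by (cases "m \<le> i") (simp_all add: step_variance_def mult_left_mono)
  qed
  also have "\<dots> = (\<Sum>n\<in>{m..<N}. step_variance D eps x n)"
    by (intro sum.mono_neutral_cong_right) auto
  finally show ?thesis .
qed

lemma emeasure_ball_walk_oscillation_le_finite:
  fixes D :: "'a::euclidean_space set"
  assumes "0 < \<alpha>"
  shows "emeasure walk_space {\<omega>. \<exists>j\<in>{m..N}. \<alpha> \<le> dist (ball_walk D eps x \<omega> j) (ball_walk D eps x \<omega> m)}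
    \<le> ennreal (1 / \<alpha>\<^sup>2) * (\<Sum>n\<in>{m..<N}. step_variance D eps x n)"
proof -
  let ?S = "\<lambda>\<omega>. \<Sum>i<N. stopped_radius D eps x m \<alpha> i \<omega> *\<^sub>R \<omega> i"
  have "emeasure walk_space {\<omega>. \<exists>j\<in>{m..N}. \<alpha> \<le> dist (ball_walk D eps x \<omega> j) (ball_walk D eps x \<omega> m)}
      \<le> emeasure walk_space {\<omega>\<in>space walk_space. \<alpha> \<le> norm (?S \<omega>)}"
    by (rule emeasure_mono) (auto intro: norm_sum_stopped_radius_ge sets_walk_space_Collect)
  also have "\<dots> \<le> ennreal (1 / \<alpha>\<^sup>2) * (\<integral>\<^sup>+\<omega>. ennreal ((norm (?S \<omega>))\<^sup>2) \<partial>walk_space)"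
    by (rule emeasure_norm_ge_le_nn_integral_sq) (simp_all add: \<open>0 < \<alpha>\<close>)
  also have "\<dots> \<le> ennreal (1 / \<alpha>\<^sup>2) * (\<Sum>n\<in>{m..<N}. step_variance D eps x n)"
    by (intro mult_left_mono nn_integral_norm_sq_sum_stopped_radius_le) simp
  finally show ?thesis .
qed

lemma emeasure_ball_walk_oscillation_le:
  fixes D :: "'a::euclidean_space set"
  assumes "0 < \<alpha>"
  shows "emeasure walk_space {\<omega>. \<exists>j\<ge>m. \<alpha> \<le> dist (ball_walk D eps x \<omega> j) (ball_walk D eps x \<omega> m)}
    \<le> ennreal (1 / \<alpha>\<^sup>2) * (\<Sum>n. step_variance D eps x (n + m))"
proof -
  let ?A = "\<lambda>N. {\<omega>. \<exists>j\<in>{m..N}. \<alpha> \<le> dist (ball_walk D eps x \<omega> j) (ball_walk D eps x \<omega> m)}"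
  have "{\<omega>. \<exists>j\<ge>m. \<alpha> \<le> dist (ball_walk D eps x \<omega> j) (ball_walk D eps x \<omega> m)} = (\<Union>N. ?A N)"
    by auto (meson atLeastAtMost_iff order_refl)
  moreover have "emeasure walk_space (\<Union>N. ?A N) = (SUP N. emeasure walk_space (?A N))"
    by (rule SUP_emeasure_incseq[symmetric])
      (auto intro!: sets_walk_space_Collect simp: incseq_def, measurable)
  moreover have "emeasure walk_space (?A N) \<le> ennreal (1 / \<alpha>\<^sup>2) * (\<Sum>n. step_variance D eps x (n + m))"
    for N
  proof -
    have "(\<Sum>n\<in>{m..<N}. step_variance D eps x n) = (\<Sum>n\<in>{0..<N - m}. step_variance D eps x (n + m))"
      by (cases "m \<le> N") (simp_all add: sum.shift_bounds_nat_ivl[of _ 0 m, simplified, symmetric])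
    also have "\<dots> \<le> (\<Sum>n. step_variance D eps x (n + m))"
      by (intro sum_le_suminf summableI) auto
    finally show ?thesis
      using emeasure_ball_walk_oscillation_le_finite[OF assms,
          where D=D and eps=eps and x=x and m=m and N=N]
      by (meson mult_left_mono order_trans zero_le)
  qed
  ultimately show ?thesis
    by (simp add: SUP_least)
qed

lemma ennreal_suminf_offset_tendsto_0:
  fixes f :: "nat \<Rightarrow> ennreal"
  assumes "(\<Sum>n. f n) < \<top>"
  shows "(\<lambda>m. \<Sum>n. f (n + m)) \<longlonglongrightarrow> 0"
proof -
  have partial_finite: "(\<Sum>n<m. f n) \<noteq> \<top>" for m
  proof -
    have "(\<Sum>n<m. f n) \<le> (\<Sum>n. f n)"
      by (intro sum_le_suminf summableI) auto
    then show ?thesis using assms by (metis order_le_less_trans order.irrefl)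
  qed
  have "(\<Sum>n. f (n + m)) = (\<Sum>n. f n) - (\<Sum>n<m. f n)" for m
    using suminf_offset[OF summableI, of f m] partial_finite[of m] by simp
  moreover have "(\<lambda>m. (\<Sum>n. f n) - (\<Sum>n<m. f n)) \<longlonglongrightarrow> (\<Sum>n. f n) - (\<Sum>n. f n)"
    using assms by (intro tendsto_diff_ennreal tendsto_const summable_LIMSEQ summableI) auto
  ultimately show ?thesis
    using assms by simp
qed

lemma null_sets_ball_walk_oscillating:
  fixes D :: "'a::euclidean_space set"
  assumes "bounded D" "x \<in> D" "0 \<le> eps" "0 < \<alpha>"
  shows "{\<omega>. \<forall>m. \<exists>j\<ge>m. \<alpha> \<le> dist (ball_walk D eps x \<omega> j) (ball_walk D eps x \<omega> m)} \<in> null_sets walk_space"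
    (is "?osc \<in> _")
proof -
  have "?osc \<in> sets walk_space"
    by (intro sets_walk_space_Collect) measurable
  have tail: "(\<lambda>m. ennreal (1 / \<alpha>\<^sup>2) * (\<Sum>n. step_variance D eps x (n + m))) \<longlonglongrightarrow> ennreal (1 / \<alpha>\<^sup>2) * 0"
    using suminf_step_variance_less_top[OF assms(1-3)]
    by (intro ennreal_tendsto_cmult ennreal_suminf_offset_tendsto_0) auto
  have "emeasure walk_space ?osc \<le> ennreal (1 / \<alpha>\<^sup>2) * (\<Sum>n. step_variance D eps x (n + m))" for m
  proof -
    have "emeasure walk_space ?osc
        \<le> emeasure walk_space {\<omega>. \<exists>j\<ge>m. \<alpha> \<le> dist (ball_walk D eps x \<omega> j) (ball_walk D eps x \<omega> m)}"
      by (rule emeasure_mono) (auto intro: sets_walk_space_Collect)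
    also have "\<dots> \<le> ennreal (1 / \<alpha>\<^sup>2) * (\<Sum>n. step_variance D eps x (n + m))"
      by (rule emeasure_ball_walk_oscillation_le[OF \<open>0 < \<alpha>\<close>])
    finally show ?thesis .
  qed
  then have "emeasure walk_space ?osc \<le> 0"
    using LIMSEQ_le_const[OF tail] by auto
  then show ?thesis
    using \<open>?osc \<in> sets walk_space\<close> by (intro null_setsI) auto
qed

lemma AE_convergent_ball_walk:
  fixes D :: "'a::euclidean_space set"
  assumes "bounded D" "x \<in> D" "0 \<le> eps"
  shows "AE \<omega> in walk_space. convergent (ball_walk D eps x \<omega>)"
proof -
  have "AE \<omega> in walk_space. \<forall>k. \<exists>m. \<forall>j\<ge>m.
      dist (ball_walk D eps x \<omega> j) (ball_walk D eps x \<omega> m) < 1 / real (Suc k)"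
    unfolding AE_all_countable
  proof
    fix k
    have "0 < 1 / real (Suc k)" by simp
    from null_sets_ball_walk_oscillating[OF assms this]
    show "AE \<omega> in walk_space. \<exists>m. \<forall>j\<ge>m.
        dist (ball_walk D eps x \<omega> j) (ball_walk D eps x \<omega> m) < 1 / real (Suc k)"
      by (rule AE_I') (auto simp: not_less)
  qed
  then show ?thesis
  proof eventually_elim
    case (elim \<omega>)
    have "Cauchy (ball_walk D eps x \<omega>)"
      unfolding Cauchy_altdef2
    proof (intro allI impI)
      fix e :: real assume "0 < e"
      then obtain k where "1 / real (Suc k) < e"
        using reals_Archimedean by (auto simp: inverse_eq_divide)
      then show "\<exists>m. \<forall>j\<ge>m. dist (ball_walk D eps x \<omega> j) (ball_walk D eps x \<omega> m) < e"
        using elim by (meson order.strict_trans)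
    qed
    then show ?case by (rule Cauchy_convergent)
  qed
qed

section \<open>Exit probabilities\<close>

definition walk_exit :: "'a::euclidean_space set \<Rightarrow> real \<Rightarrow> 'a \<Rightarrow> 'a set \<Rightarrow> (nat \<Rightarrow> 'a) set" where
  "walk_exit D eps x U = {\<omega>. \<exists>n. ball_walk D eps x \<omega> n \<notin> U}"

lemma sets_walk_exit [measurable]:
  assumes [measurable]: "U \<in> sets borel"
  shows "walk_exit D eps x U \<in> sets walk_space"
  unfolding walk_exit_def by (intro sets_walk_space_Collect) measurable

definition first_exit :: "'a::euclidean_space set \<Rightarrow> real \<Rightarrow> 'a \<Rightarrow> 'a set \<Rightarrow> nat \<Rightarrow> (nat \<Rightarrow> 'a) set" where
  "first_exit D eps x U k = {\<omega>. (\<forall>j<k. ball_walk D eps x \<omega> j \<in> U) \<and> ball_walk D eps x \<omega> k \<notin> U}"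

lemma sets_first_exit [measurable]:
  assumes [measurable]: "U \<in> sets borel"
  shows "first_exit D eps x U k \<in> sets walk_space"
  unfolding first_exit_def by (intro sets_walk_space_Collect) measurable

lemma disjoint_family_first_exit: "disjoint_family (first_exit D eps x U)"
  unfolding disjoint_family_on_def first_exit_def by (auto, metis linorder_neqE_nat)

lemma walk_exit_eq_UN_first_exit: "walk_exit D eps x U = (\<Union>k. first_exit D eps x U k)"
proof
  show "walk_exit D eps x U \<subseteq> (\<Union>k. first_exit D eps x U k)"
  proof
    fix \<omega> assume "\<omega> \<in> walk_exit D eps x U"
    then have "\<exists>n. ball_walk D eps x \<omega> n \<notin> U" by (simp add: walk_exit_def)
    then obtain k where "ball_walk D eps x \<omega> k \<notin> U" "\<forall>j<k. ball_walk D eps x \<omega> j \<in> U"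
      using exists_least_iff[of "\<lambda>n. ball_walk D eps x \<omega> n \<notin> U"] by blast
    then show "\<omega> \<in> (\<Union>k. first_exit D eps x U k)" by (auto simp: first_exit_def)
  qed
qed (auto simp: first_exit_def walk_exit_def)

lemma comb_seq_in_first_exit_walk_exit_iff:
  assumes "U' \<subseteq> U"
  shows "comb_seq k \<omega> \<omega>' \<in> first_exit D eps x U' k \<inter> walk_exit D eps x U
    \<longleftrightarrow> \<omega> \<in> first_exit D eps x U' k \<and> \<omega>' \<in> walk_exit D eps (ball_walk D eps x \<omega> k) U"
proof -
  let ?X = "ball_walk D eps x"
  have "comb_seq k \<omega> \<omega>' \<in> first_exit D eps x U' k \<longleftrightarrow> \<omega> \<in> first_exit D eps x U' k"
    by (simp add: first_exit_def ball_walk_comb_seq_le)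
  moreover have "(\<exists>n. ?X (comb_seq k \<omega> \<omega>') n \<notin> U) \<longleftrightarrow> (\<exists>n. ball_walk D eps (?X \<omega> k) \<omega>' n \<notin> U)"
    if "\<omega> \<in> first_exit D eps x U' k"
  proof
    assume "\<exists>n. ?X (comb_seq k \<omega> \<omega>') n \<notin> U"
    then obtain n where n: "?X (comb_seq k \<omega> \<omega>') n \<notin> U" by blast
    have "\<not> n < k"
      using n that assms by (auto simp: first_exit_def ball_walk_comb_seq_le)
    then obtain n' where "n = k + n'" using le_Suc_ex not_less by blast
    then show "\<exists>n. ball_walk D eps (?X \<omega> k) \<omega>' n \<notin> U"
      using n by (auto simp: ball_walk_comb_seq_add)
  next
    assume "\<exists>n. ball_walk D eps (?X \<omega> k) \<omega>' n \<notin> U"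
    then show "\<exists>n. ?X (comb_seq k \<omega> \<omega>') n \<notin> U"
      by (metis ball_walk_comb_seq_add)
  qed
  ultimately show ?thesis by (auto simp: walk_exit_def)
qed

lemma first_exit_near:
  assumes "\<omega> \<in> first_exit D eps x U k" "x \<in> U" "\<forall>n. \<omega> n \<in> ball 0 1" "0 \<le> eps"
  obtains u where "u \<in> U" "dist u (ball_walk D eps x \<omega> k) \<le> eps"
proof (cases k)
  case 0 then show ?thesis using that assms(2,4) by simp
next
  case (Suc j)
  then show ?thesis
    using that[of "ball_walk D eps x \<omega> j"] assms(1) dist_ball_walk_Suc_le[OF assms(3,4), of D x j]
    by (auto simp: first_exit_def dist_commute)
qed

text \<open>Strong Markov property at the first exit time from \<open>U'\<close>.\<close>
lemma emeasure_first_exit_walk_exit_le: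
  fixes D :: "'a::euclidean_space set"
  assumes "0 \<le> eps" "x \<in> D" "x \<in> U'" "U' \<subseteq> U" and [measurable]: "U' \<in> sets borel" "U \<in> sets borel"
    and bound: "\<And>y u. y \<in> D \<Longrightarrow> u \<in> U' \<Longrightarrow> dist u y \<le> eps \<Longrightarrow> emeasure walk_space (walk_exit D eps y U) \<le> \<theta>"
  shows "emeasure walk_space (first_exit D eps x U' k \<inter> walk_exit D eps x U)
    \<le> \<theta> * emeasure walk_space (first_exit D eps x U' k)"
proof -
  let ?A = "first_exit D eps x U' k" and ?X = "ball_walk D eps x"
  have "emeasure walk_space (?A \<inter> walk_exit D eps x U)
      = (\<integral>\<^sup>+\<omega>. indicator (?A \<inter> walk_exit D eps x U) \<omega> \<partial>walk_space)"
    by (rule nn_integral_indicator[symmetric]) measurable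
  also have "\<dots> = (\<integral>\<^sup>+\<omega>. \<integral>\<^sup>+\<omega>'. indicator (?A \<inter> walk_exit D eps x U) (comb_seq k \<omega> \<omega>')
      \<partial>walk_space \<partial>walk_space)"
    by (rule nn_integral_walk_space_comb_seq) measurable
  also have "\<dots> = (\<integral>\<^sup>+\<omega>. indicator ?A \<omega> * emeasure walk_space (walk_exit D eps (?X \<omega> k) U) \<partial>walk_space)"
  proof (rule nn_integral_cong)
    fix \<omega>
    have "indicator (?A \<inter> walk_exit D eps x U) (comb_seq k \<omega> \<omega>')
        = indicator ?A \<omega> * (indicator (walk_exit D eps (?X \<omega> k) U) \<omega>' :: ennreal)" for \<omega>'
      using comb_seq_in_first_exit_walk_exit_iff[OF \<open>U' \<subseteq> U\<close>, of k \<omega> \<omega>'] by (simp add: indicator_def)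
    then show "(\<integral>\<^sup>+\<omega>'. indicator (?A \<inter> walk_exit D eps x U) (comb_seq k \<omega> \<omega>') \<partial>walk_space)
        = indicator ?A \<omega> * emeasure walk_space (walk_exit D eps (?X \<omega> k) U)"
      by (simp add: nn_integral_cmult)
  qed
  also have "\<dots> \<le> (\<integral>\<^sup>+\<omega>. \<theta> * indicator ?A \<omega> \<partial>walk_space)"
  proof (rule nn_integral_mono_AE)
    show "AE \<omega> in walk_space. indicator ?A \<omega> * emeasure walk_space (walk_exit D eps (?X \<omega> k) U)
        \<le> \<theta> * indicator ?A \<omega>"
      using AE_walk_space
    proof eventually_elim
      case (elim \<omega>)
      show ?case
      proof (cases "\<omega> \<in> ?A")
        case True
        have "?X \<omega> k \<in> D" using ball_walk_in_domain elim assms(1,2) by blast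
        moreover obtain u where "u \<in> U'" "dist u (?X \<omega> k) \<le> eps"
          using first_exit_near[OF True \<open>x \<in> U'\<close> elim \<open>0 \<le> eps\<close>] .
        ultimately show ?thesis using bound True by (simp add: mult.commute)
      qed simp
    qed
  qed
  also have "\<dots> = \<theta> * emeasure walk_space ?A"
    by (rule nn_integral_cmult_indicator) simp
  finally show ?thesis .
qed

lemma emeasure_walk_exit_le_mult:
  fixes D :: "'a::euclidean_space set"
  assumes "0 \<le> eps" "x \<in> D" "x \<in> U'" "U' \<subseteq> U" and [measurable]: "U' \<in> sets borel" "U \<in> sets borel"
    and bound: "\<And>y u. y \<in> D \<Longrightarrow> u \<in> U' \<Longrightarrow> dist u y \<le> eps \<Longrightarrow> emeasure walk_space (walk_exit D eps y U) \<le> \<theta>"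
  shows "emeasure walk_space (walk_exit D eps x U) \<le> \<theta> * emeasure walk_space (walk_exit D eps x U')"
proof -
  let ?A = "first_exit D eps x U'"
  have "walk_exit D eps x U \<subseteq> walk_exit D eps x U'"
    using \<open>U' \<subseteq> U\<close> by (auto simp: walk_exit_def)
  then have "walk_exit D eps x U = (\<Union>k. ?A k \<inter> walk_exit D eps x U)"
    unfolding walk_exit_eq_UN_first_exit[of D eps x U'] by blast
  then have "emeasure walk_space (walk_exit D eps x U)
      = emeasure walk_space (\<Union>k. ?A k \<inter> walk_exit D eps x U)"
    by simp
  also have "\<dots> = (\<Sum>k. emeasure walk_space (?A k \<inter> walk_exit D eps x U))"
    using disjoint_family_first_exit[of D eps x U']
    by (intro suminf_emeasure[symmetric]) (auto simp: disjoint_family_on_def)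
  also have "\<dots> \<le> (\<Sum>k. \<theta> * emeasure walk_space (?A k))"
    by (intro suminf_le emeasure_first_exit_walk_exit_le[OF assms]) auto
  also have "\<dots> = \<theta> * emeasure walk_space (walk_exit D eps x U')"
    using disjoint_family_first_exit[of D eps x U']
    by (simp add: walk_exit_eq_UN_first_exit[of D eps x U'] suminf_emeasure image_subset_iff)
  finally show ?thesis .
qed

lemma measure_walk_exit_le_mult:
  fixes D :: "'a::euclidean_space set"
  assumes "0 \<le> eps" "x \<in> D" "x \<in> U'" "U' \<subseteq> U" and [measurable]: "U' \<in> sets borel" "U \<in> sets borel"
    and bound: "\<And>y u. y \<in> D \<Longrightarrow> u \<in> U' \<Longrightarrow> dist u y \<le> eps \<Longrightarrow> measure walk_space (walk_exit D eps y U) \<le> \<theta>"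
  shows "measure walk_space (walk_exit D eps x U) \<le> \<theta> * measure walk_space (walk_exit D eps x U')"
proof -
  interpret P: prob_space "walk_space :: (nat \<Rightarrow> 'a) measure" by (rule prob_space_walk_space)
  have "measure walk_space (walk_exit D eps x U) \<le> \<theta>"
    using assms(1-3) by (intro bound[of x x]) auto
  then have "0 \<le> \<theta>"
    using measure_nonneg order_trans by blast
  have "ennreal (measure walk_space (walk_exit D eps x U))
      \<le> ennreal \<theta> * ennreal (measure walk_space (walk_exit D eps x U'))"
    using emeasure_walk_exit_le_mult[OF assms(1-6), of "ennreal \<theta>"] bound
    by (simp add: P.emeasure_eq_measure ennreal_leI)
  then show ?thesis
    using \<open>0 \<le> \<theta>\<close> by (simp add: ennreal_mult[symmetric] ennreal_le_iff)
qed

definition uniform_exit_bound :: "'a::euclidean_space set \<Rightarrow> 'a \<Rightarrow> real \<Rightarrow> bool" where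
  "uniform_exit_bound D y0 \<theta> \<longleftrightarrow>
     (\<forall>\<delta>>0. \<exists>\<delta>h\<in>{0<..<\<delta>}. \<exists>\<epsilon>h\<in>{0<..<1::real}. \<forall>\<epsilon>\<in>{0<..<\<epsilon>h}. \<forall>x0\<in>ball y0 \<delta>h \<inter> D.
        measure walk_space (walk_exit D \<epsilon> x0 (ball y0 \<delta>)) \<le> \<theta>)"

lemma uniform_exit_bound_mono:
  "uniform_exit_bound D y0 \<theta> \<Longrightarrow> \<theta> \<le> \<theta>' \<Longrightarrow> uniform_exit_bound D y0 \<theta>'"
  unfolding uniform_exit_bound_def by (meson order_trans)

lemma uniform_exit_bound_mult:
  assumes "uniform_exit_bound D y0 \<theta>" "uniform_exit_bound D y0 \<theta>'" "0 \<le> \<theta>"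
  shows "uniform_exit_bound D y0 (\<theta> * \<theta>')"
  unfolding uniform_exit_bound_def
proof (intro allI impI)
  fix \<rho> :: real assume "0 < \<rho>"
  then obtain \<delta>h \<epsilon>h where \<delta>h: "\<delta>h \<in> {0<..<\<rho>}" and \<epsilon>h: "\<epsilon>h \<in> {0<..<1::real}"
    and outer: "\<forall>\<epsilon>\<in>{0<..<\<epsilon>h}. \<forall>y\<in>ball y0 \<delta>h \<inter> D. measure walk_space (walk_exit D \<epsilon> y (ball y0 \<rho>)) \<le> \<theta>"
    using assms(1) unfolding uniform_exit_bound_def by meson
  have "0 < \<delta>h / 2" using \<delta>h by simp
  then obtain r e where r: "r \<in> {0<..<\<delta>h / 2}" and e: "e \<in> {0<..<1::real}"
    and inner: "\<forall>\<epsilon>\<in>{0<..<e}. \<forall>x0\<in>ball y0 r \<inter> D.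
      measure walk_space (walk_exit D \<epsilon> x0 (ball y0 (\<delta>h / 2))) \<le> \<theta>'"
    using assms(2) unfolding uniform_exit_bound_def by blast
  define e' where "e' = min e (min \<epsilon>h (\<delta>h / 2))"
  have "\<forall>\<epsilon>\<in>{0<..<e'}. \<forall>x0\<in>ball y0 r \<inter> D. measure walk_space (walk_exit D \<epsilon> x0 (ball y0 \<rho>)) \<le> \<theta> * \<theta>'"
  proof (intro ballI)
    fix \<epsilon> x0 assume \<epsilon>: "\<epsilon> \<in> {0<..<e'}" and x0: "x0 \<in> ball y0 r \<inter> D"
    have "measure walk_space (walk_exit D \<epsilon> x0 (ball y0 \<rho>))
        \<le> \<theta> * measure walk_space (walk_exit D \<epsilon> x0 (ball y0 (\<delta>h / 2)))"
    proof (rule measure_walk_exit_le_mult)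
      fix y u assume "y \<in> D" "u \<in> ball y0 (\<delta>h / 2)" "dist u y \<le> \<epsilon>"
      then have "y \<in> ball y0 \<delta>h \<inter> D"
        using \<epsilon> dist_triangle[of y0 y u] by (auto simp: e'_def)
      then show "measure walk_space (walk_exit D \<epsilon> y (ball y0 \<rho>)) \<le> \<theta>"
        using outer \<epsilon> by (auto simp: e'_def)
    qed (use \<epsilon> x0 r \<delta>h in \<open>auto simp: e'_def\<close>)
    also have "\<dots> \<le> \<theta> * \<theta>'"
      using inner \<epsilon> x0 \<open>0 \<le> \<theta>\<close> by (intro mult_left_mono) (auto simp: e'_def)
    finally show "measure walk_space (walk_exit D \<epsilon> x0 (ball y0 \<rho>)) \<le> \<theta> * \<theta>'" .
  qed
  moreover have "r \<in> {0<..<\<rho>}" "e' \<in> {0<..<1::real}"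
    using r e \<epsilon>h \<delta>h by (auto simp: e'_def)
  ultimately show "\<exists>\<delta>h\<in>{0<..<\<rho>}. \<exists>\<epsilon>h\<in>{0<..<1::real}. \<forall>\<epsilon>\<in>{0<..<\<epsilon>h}. \<forall>x0\<in>ball y0 \<delta>h \<inter> D.
      measure walk_space (walk_exit D \<epsilon> x0 (ball y0 \<rho>)) \<le> \<theta> * \<theta>'"
    by blast
qed

lemma uniform_exit_bound_power:
  assumes "uniform_exit_bound D y0 \<theta>" "0 \<le> \<theta>"
  shows "uniform_exit_bound D y0 (\<theta> ^ Suc n)"
  by (induction n) (simp_all add: assms uniform_exit_bound_mult)

lemma measurable_walk_limit [measurable]:
  "walk_limit D eps x \<in> borel_measurable (walk_space :: (nat \<Rightarrow> 'a::euclidean_space) measure)"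
  unfolding walk_limit_def[abs_def]
  by (rule borel_measurable_lim_metric) (rule measurable_ball_walk)

lemma measure_walk_limit_in_ge:
  fixes D :: "'a::euclidean_space set"
  assumes "bounded D" "x \<in> D" "0 \<le> eps" "closure U \<subseteq> V"
    and [measurable]: "U \<in> sets borel" "V \<in> sets borel"
  shows "1 - measure walk_space (walk_exit D eps x U)
    \<le> measure walk_space {\<omega>\<in>space walk_space. walk_limit D eps x \<omega> \<in> V}"
proof -
  interpret P: prob_space "walk_space :: (nat \<Rightarrow> 'a) measure" by (rule prob_space_walk_space)
  have "AE \<omega> in walk_space. \<omega> \<in> space walk_space - walk_exit D eps x U \<longrightarrow> walk_limit D eps x \<omega> \<in> V"
    using AE_convergent_ball_walk[OF assms(1-3)]
  proof eventually_elim
    case (elim \<omega>)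
    show ?case
    proof
      assume "\<omega> \<in> space walk_space - walk_exit D eps x U"
      then have "\<forall>n. ball_walk D eps x \<omega> n \<in> closure U"
        by (auto simp: walk_exit_def intro: closure_subset[THEN subsetD])
      moreover have "ball_walk D eps x \<omega> \<longlonglongrightarrow> walk_limit D eps x \<omega>"
        using elim by (simp add: walk_limit_def convergent_LIMSEQ_iff)
      ultimately have "walk_limit D eps x \<omega> \<in> closure U"
        by (intro Lim_in_closed_set[of "closure U" "ball_walk D eps x \<omega>"]) auto
      then show "walk_limit D eps x \<omega> \<in> V"
        using assms(4) by blast
    qed
  qed
  then have "measure walk_space (space walk_space - walk_exit D eps x U)
      \<le> measure walk_space {\<omega>\<in>space walk_space. walk_limit D eps x \<omega> \<in> V}"
    by (intro P.finite_measure_mono_AE) (auto intro: sets_walk_space_Collect)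
  then show ?thesis
    using P.prob_compl[OF sets_walk_exit[OF \<open>U \<in> sets borel\<close>]] by simp
qed

lemma uniform_exit_bound_less:
  assumes "uniform_exit_bound D y0 \<theta>" "\<theta> < 1" "0 < \<eta>"
  shows "uniform_exit_bound D y0 \<eta>"
proof -
  define \<theta>' where "\<theta>' = max \<theta> 0"
  have \<theta>': "uniform_exit_bound D y0 \<theta>'" "0 \<le> \<theta>'" "\<theta>' < 1"
    using assms(1,2) by (auto simp: \<theta>'_def intro: uniform_exit_bound_mono)
  have "eventually (\<lambda>n. \<theta>' ^ n < \<eta>) sequentially"
    using LIMSEQ_realpow_zero[OF \<theta>'(2,3)] \<open>0 < \<eta>\<close> by (rule order_tendstoD(2))
  then obtain k where "\<theta>' ^ Suc k < \<eta>"
    unfolding eventually_sequentially by (meson le_SucI order_refl)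
  then show ?thesis
    using uniform_exit_bound_power[OF \<theta>'(1,2)] by (meson less_imp_le uniform_exit_bound_mono)
qed

lemma walk_regularI:
  fixes D :: "'a::euclidean_space set"
  assumes "bounded D" "y0 \<in> frontier D" "\<And>\<eta>. 0 < \<eta> \<Longrightarrow> uniform_exit_bound D y0 \<eta>"
  shows "walk_regular D y0"
  unfolding walk_regular_def
proof (intro conjI allI impI \<open>y0 \<in> frontier D\<close>)
  fix \<eta> \<delta> :: real assume "0 < \<eta>" "0 < \<delta>"
  then obtain \<delta>h \<epsilon>h where "\<delta>h \<in> {0<..<\<delta> / 2}" "\<epsilon>h \<in> {0<..<1::real}"
    and exit: "\<forall>\<epsilon>\<in>{0<..<\<epsilon>h}. \<forall>x0\<in>ball y0 \<delta>h \<inter> D.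
      measure walk_space (walk_exit D \<epsilon> x0 (ball y0 (\<delta> / 2))) \<le> \<eta>"
    using assms(3)[of \<eta>] unfolding uniform_exit_bound_def by (metis half_gt_zero)
  have "1 - \<eta> \<le> measure walk_space {\<omega>\<in>space walk_space. walk_limit D \<epsilon> x0 \<omega> \<in> ball y0 \<delta>}"
    if "\<epsilon> \<in> {0<..<\<epsilon>h}" "x0 \<in> ball y0 \<delta>h \<inter> D" for \<epsilon> x0
  proof -
    have "closure (ball y0 (\<delta> / 2)) \<subseteq> ball y0 \<delta>"
      using \<open>0 < \<delta>\<close> by (simp add: subset_eq)
    then have "1 - measure walk_space (walk_exit D \<epsilon> x0 (ball y0 (\<delta> / 2)))
        \<le> measure walk_space {\<omega>\<in>space walk_space. walk_limit D \<epsilon> x0 \<omega> \<in> ball y0 \<delta>}"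
      using that by (intro measure_walk_limit_in_ge \<open>bounded D\<close>) auto
    moreover have "measure walk_space (walk_exit D \<epsilon> x0 (ball y0 (\<delta> / 2))) \<le> \<eta>"
      using exit that by blast
    ultimately show ?thesis by linarith
  qed
  then show "\<exists>\<delta>h\<in>{0<..<\<delta>}. \<exists>\<epsilon>h\<in>{0<..<1::real}. \<forall>\<epsilon>\<in>{0<..<\<epsilon>h}. \<forall>x0\<in>ball y0 \<delta>h \<inter> D.
      1 - \<eta> \<le> measure walk_space {\<omega>\<in>space walk_space. walk_limit D \<epsilon> x0 \<omega> \<in> ball y0 \<delta>}"
    using \<open>\<delta>h \<in> _\<close> \<open>\<epsilon>h \<in> _\<close> by (intro bexI[of _ \<delta>h] bexI[of _ \<epsilon>h]) auto
qed

theorem lemma2p18: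
  fixes D :: "'a::euclidean_space set" and y0 :: 'a
  assumes "open D" and "bounded D" and "connected D"
    and "y0 \<in> frontier D"
    and "\<exists>\<theta>0<(1::real). \<forall>\<delta>>0. \<exists>\<delta>h\<in>{0<..<\<delta>}. \<exists>\<epsilon>h\<in>{0<..<1::real}.
           \<forall>\<epsilon>\<in>{0<..<\<epsilon>h}. \<forall>x0\<in>ball y0 \<delta>h \<inter> D.
             measure walk_space {\<omega>\<in>space walk_space. \<exists>n. ball_walk D \<epsilon> x0 \<omega> n \<notin> ball y0 \<delta>} \<le> \<theta>0"
  shows "walk_regular D y0"
proof -
  obtain \<theta>0 where \<theta>0: "uniform_exit_bound D y0 \<theta>0" "\<theta>0 < 1"
    using assms(5) by (auto simp: uniform_exit_bound_def walk_exit_def)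
  show ?thesis
    by (rule walk_regularI[OF \<open>bounded D\<close> \<open>y0 \<in> frontier D\<close> uniform_exit_bound_less[OF \<theta>0]])
qed

end
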